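(* Let $p\ge3$ be a prime, $P$ cyclic of order $p$, and $K\le\mathrm{Aut}(P)$. For $i,j\in\{1,2,3\}$ with $i\ne j$ such that $|\sigma_i|$ and $|\sigma_j|$ divide $|K|$, the $S$-rings $\mathcal{A}_i(K)$ and $\mathcal{A}_j(K)$ are not algebraically isomorphic.
   Context: $E_1=\langle a\rangle\times\langle b\rangle$ with $|a|=|b|=2$, $E_2=\langle c\rangle$ with $|c|=4$. $\sigma_1\in\mathrm{Aut}(E_1)$: $a\mapsto b$, $b\mapsto ab$ (order 3); $\sigma_2\in\mathrm{Aut}(E_1)$: $a\mapsto b$, $b\mapsto a$ (order 2); $\sigma_3\in\mathrm{Aut}(E_2)$: $c\mapsto c^{-1}$ (order 2). Let $E=E_1$ for $i=1,2$ and $E=E_2$ for $i=3$, $G=E\times P$. For $K\le\mathrm{Aut}(P)$ with $|\sigma_i|$ dividing $|K|$: fix a generator $\theta$ of $K$, let $M\le K$ have index $|\sigma_i|$, let $\psi:\langle\sigma_i\rangle\to K/M$, $\sigma_i^k\mapsto M\theta^k$, and $A(\langle\sigma_i\rangle,K,\psi)=\{(x,y)\in\langle\sigma_i\rangle\times K:x^\psi=yM\}\le\mathrm{Aut}(E)\times\mathrm{Aut}(P)\le\mathrm{Aut}(G)$. Then $\mathcal{A}_i(K)=\mathrm{Cyc}(A(\langle\sigma_i\rangle,K,\psi),G)$, where for $A\le\mathrm{Aut}(G)$, $\mathrm{Cyc}(A,G)$ is the $S$-ring over $G$ whose basic sets are the $A$-orbits on $G$. An $S$-ring over $G$ is a subring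 of $\mathbb{Z}G$ spanned by $\underline{X}=\sum_{x\in X}x$ over a partition $\mathcal{S}$ (basic sets) of $G$ containing $\{e\}$ and closed under inversion; structure constants $c^Z_{X,Y}$ count pairs $(x,y)\in X\times Y$ with $xy=z$ for fixed $z\in Z$. An algebraic isomorphism is a bijection between the sets of basic sets preserving all structure constants. *)

theory Defs
  imports "HOL-Algebra.Algebra"
begin

definition Cyc :: "('a \<Rightarrow> 'a) set \<Rightarrow> ('a, 'm) monoid_scheme \<Rightarrow> 'a set set" where
  "Cyc A G = (\<lambda>g. (\<lambda>f. f g) ` A) ` carrier G"

text \<open>Structure constant c^Z_{X,Y}: number of pairs (x,y) in X x Y with x y = z,
  for a fixed element z of Z.\<close>
definition struct_const :: "('a, 'm) monoid_scheme \<Rightarrow> 'a set \<Rightarrow> 'a set \<Rightarrow> 'a set \<Rightarrow> nat" where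
  "struct_const G B1 B2 B3 = card {(x, y). x \<in> B1 \<and> y \<in> B2 \<and> x \<otimes>\<^bsub>G\<^esub> y = (SOME z. z \<in> B3)}"

definition alg_isomorphic ::
  "('a, 'm) monoid_scheme \<Rightarrow> 'a set set \<Rightarrow> ('b, 'n) monoid_scheme \<Rightarrow> 'b set set \<Rightarrow> bool" where
  "alg_isomorphic G S H T =
     (\<exists>f. bij_betw f S T \<and>
          (\<forall>B1\<in>S. \<forall>B2\<in>S. \<forall>B3\<in>S. struct_const H (f B1) (f B2) (f B3) = struct_const G B1 B2 B3))"

text \<open>E_1 = <a> x <b> with |a| = |b| = 2, written additively: a = (1,0), b = (0,1).\<close>
definition E1 :: "(int \<times> int) monoid" where
  "E1 = integer_mod_group 2 \<times>\<times> integer_mod_group 2"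

text \<open>E_2 = <c> with |c| = 4, c = 1.\<close>
definition E2 :: "int monoid" where
  "E2 = integer_mod_group 4"

text \<open>sigma_1: a -> b, b -> ab, i.e. a^s b^t -> b^s (ab)^t = a^t b^(s+t).\<close>
definition sigma1 :: "int \<times> int \<Rightarrow> int \<times> int" where
  "sigma1 e = (snd e, (fst e + snd e) mod 2)"

definition sigma2 :: "int \<times> int \<Rightarrow> int \<times> int" where
  "sigma2 e = (snd e, fst e)"

definition sigma3 :: "int \<Rightarrow> int" where
  "sigma3 e = (- e) mod 4"

text \<open>A(<sigma>,K,psi) = {(x,y) in <sigma> x K : x^psi = yM}, where psi(sigma^k) = M theta^k
  (cosets taken in Aut(P)).\<close>
definition Apsi :: "('e \<Rightarrow> 'e) \<Rightarrow> ('p, 'z) monoid_scheme \<Rightarrow> ('p \<Rightarrow> 'p) set \<Rightarrow> ('p \<Rightarrow> 'p)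
                    \<Rightarrow> ('p \<Rightarrow> 'p) set \<Rightarrow> (('e \<Rightarrow> 'e) \<times> ('p \<Rightarrow> 'p)) set" where
  "Apsi \<sigma> P K \<theta> M =
     {(x, y). y \<in> K \<and>
        (\<exists>k::nat. x = \<sigma> ^^ k \<and>
           y <#\<^bsub>AutoGroup P\<^esub> M = M #>\<^bsub>AutoGroup P\<^esub> (\<theta> [^]\<^bsub>AutoGroup P\<^esub> k))}"

definition prod_aut :: "('e \<Rightarrow> 'e) \<times> ('p \<Rightarrow> 'p) \<Rightarrow> ('e \<times> 'p \<Rightarrow> 'e \<times> 'p)" where
  "prod_aut xy = (\<lambda>g. (fst xy (fst g), snd xy (snd g)))"

definition SA :: "('e, 'w) monoid_scheme \<Rightarrow> ('e \<Rightarrow> 'e) \<Rightarrow> ('p, 'z) monoid_scheme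
                  \<Rightarrow> ('p \<Rightarrow> 'p) set \<Rightarrow> ('p \<Rightarrow> 'p) \<Rightarrow> ('p \<Rightarrow> 'p) set \<Rightarrow> ('e \<times> 'p) set set" where
  "SA E \<sigma> P K \<theta> M = Cyc (prod_aut ` Apsi \<sigma> P K \<theta> M) (E \<times>\<times> P)"

definition index_subgroup :: "('p, 'z) monoid_scheme \<Rightarrow> ('p \<Rightarrow> 'p) set \<Rightarrow> ('p \<Rightarrow> 'p) set \<Rightarrow> nat \<Rightarrow> bool" where
  "index_subgroup P K M n = (subgroup M (AutoGroup P) \<and> M \<subseteq> K \<and> card K = n * card M)"

end

theory Submission
  imports Defs
begin

text \<open>An algebraic isomorphism carries the unit basic set \<open>{1}\<close>, the only basic set acting as
  the identity on structure constants, to \<open>{1}\<close>, and hence preserves every \<open>c\<^sup>1\<^sub>U\<^sub>U\<close>. Two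
  properties read off from these numbers separate the three S-rings.

  Some nontrivial basic set is a singleton \<open>{t}\<close> with \<open>t\<^sup>2 = 1\<close>: in \<open>\<A>\<^sub>2\<close> and \<open>\<A>\<^sub>3\<close> take
  \<open>t = (ab, 1)\<close> and \<open>t = (c\<^sup>2, 1)\<close>, which the whole group \<open>A\<close> fixes. In \<open>\<A>\<^sub>1\<close> such a \<open>t\<close> has
  the form \<open>(e, 1)\<close>, as \<open>|P|\<close> is odd, and its orbit also contains the involution \<open>(\<sigma>\<^sub>1 e, 1) \<noteq> t\<close>.

  Every basic set is closed under inversion: \<open>K\<close> is cyclic, so \<open>M\<close> is its unique subgroup of
  index 2 and \<open>\<theta>\<^sup>k \<in> M\<close> iff \<open>k\<close> is even, and the inversion \<open>\<iota>\<close> of \<open>P\<close> is the involution of \<open>K\<close>.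
  If the images of \<open>(e, g)\<close>, with \<open>g\<close> a generator of \<open>P\<close>, under \<open>(\<sigma>\<^sup>k, m\<theta>\<^sup>k)\<close> and
  \<open>(\<sigma>\<^sup>j, m'\<theta>\<^sup>j)\<close> are mutually inverse, then \<open>m\<theta>\<^sup>k = \<iota> m'\<theta>\<^sup>j\<close>, so \<open>\<iota> \<in> M\<close> iff
  \<open>k \<equiv> j (mod 2)\<close>. For \<open>e = a\<close> under \<open>\<sigma>\<^sub>2\<close> this requires \<open>k \<equiv> j\<close>, for \<open>e = c\<close> under \<open>\<sigma>\<^sub>3\<close>
  it requires \<open>k \<not>\<equiv> j\<close>; conversely \<open>(1, \<iota>)\<close>, resp. \<open>(\<sigma>\<^sub>3, \<iota>)\<close>, inverts every element when it
  lies in \<open>A\<close>. Hence \<open>\<A>\<^sub>2\<close> is symmetric iff \<open>\<iota> \<in> M\<close>, and \<open>\<A>\<^sub>3\<close> iff \<open>\<iota> \<notin> M\<close>.\<close>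

section \<open>Invariants of algebraic isomorphisms\<close>

lemma struct_const_singleton:
  "struct_const G A B {z} = card {(x, y). x \<in> A \<and> y \<in> B \<and> x \<otimes>\<^bsub>G\<^esub> y = z}"
  by (simp add: struct_const_def)

lemma struct_const_singleton_eq_0_iff:
  assumes "finite A" and "finite B"
  shows "struct_const G A B {z} = 0 \<longleftrightarrow> (\<forall>x\<in>A. \<forall>y\<in>B. x \<otimes>\<^bsub>G\<^esub> y \<noteq> z)"
proof -
  have "finite {(x, y). x \<in> A \<and> y \<in> B \<and> x \<otimes>\<^bsub>G\<^esub> y = z}"
    by (rule finite_subset[of _ "A \<times> B"]) (use assms in auto)
  then show ?thesis by (auto simp: struct_const_singleton)
qed

definition is_unit_basic_set :: "('a, 'm) monoid_scheme \<Rightarrow> 'a set set \<Rightarrow> 'a set \<Rightarrow> bool" where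
  "is_unit_basic_set G S B0 \<longleftrightarrow>
     B0 \<in> S \<and> (\<forall>Y\<in>S. \<forall>Z\<in>S. struct_const G B0 Y Z = (if Y = Z then 1 else 0))"

text \<open>In an orbit S-ring with unit basic set \<open>{e}\<close>, \<open>c\<^sup>e\<^sub>U\<^sub>U\<close> is \<open>|U|\<close> if \<open>U = U\<inverse>\<close> and
  \<open>0\<close> otherwise. So the first invariant says that some nontrivial basic set is a singleton
  \<open>{t}\<close> with \<open>t\<^sup>2 = e\<close>, the second that every basic set is closed under inversion.\<close>

definition has_thin_symmetric_set :: "('a, 'm) monoid_scheme \<Rightarrow> 'a set set \<Rightarrow> 'a set \<Rightarrow> bool" where
  "has_thin_symmetric_set G S B0 \<longleftrightarrow> (\<exists>U\<in>S. U \<noteq> B0 \<and> struct_const G U U B0 = 1)"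

definition symmetric_sring :: "('a, 'm) monoid_scheme \<Rightarrow> 'a set set \<Rightarrow> 'a set \<Rightarrow> bool" where
  "symmetric_sring G S B0 \<longleftrightarrow> (\<forall>U\<in>S. struct_const G U U B0 \<noteq> 0)"

lemma struct_const_preserving_bij_unit_basic_set:
  assumes bij: "bij_betw f S T"
    and pres: "\<forall>A\<in>S. \<forall>B\<in>S. \<forall>C\<in>S. struct_const H (f A) (f B) (f C) = struct_const G A B C"
    and unit: "is_unit_basic_set G S B0"
  shows "is_unit_basic_set H T (f B0)"
  unfolding is_unit_basic_set_def
proof (intro conjI ballI)
  show "f B0 \<in> T" using unit bij bij_betwE unfolding is_unit_basic_set_def by blast
next
  fix Y Z assume "Y \<in> T" "Z \<in> T"
  then obtain Y' Z' where Y': "Y' \<in> S" "Y = f Y'" and Z': "Z' \<in> S" "Z = f Z'"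
    using bij by (auto simp: bij_betw_def)
  have "Y = Z \<longleftrightarrow> Y' = Z'" using Y' Z' bij by (auto simp: bij_betw_def inj_on_def)
  then show "struct_const H (f B0) Y Z = (if Y = Z then 1 else 0)"
    using unit pres Y' Z' unfolding is_unit_basic_set_def by auto
qed

lemma alg_isomorphic_invariants:
  assumes iso: "alg_isomorphic G S H T"
    and unit_S: "\<And>B. is_unit_basic_set G S B \<longleftrightarrow> B = B0"
    and unit_T: "\<And>B. is_unit_basic_set H T B \<longleftrightarrow> B = B0'"
  shows "has_thin_symmetric_set G S B0 \<longleftrightarrow> has_thin_symmetric_set H T B0'"
    and "symmetric_sring G S B0 \<longleftrightarrow> symmetric_sring H T B0'"
proof -
  obtain f where bij: "bij_betw f S T"
    and pres: "\<forall>A\<in>S. \<forall>B\<in>S. \<forall>C\<in>S. struct_const H (f A) (f B) (f C) = struct_const G A B C"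
    using iso unfolding alg_isomorphic_def by blast
  have B0_in_S: "B0 \<in> S" using unit_S[of B0] unfolding is_unit_basic_set_def by blast
  have "f B0 = B0'"
    using struct_const_preserving_bij_unit_basic_set[OF bij pres] unit_S unit_T by blast
  then have pres_unit: "struct_const H (f U) (f U) B0' = struct_const G U U B0" if "U \<in> S" for U
    using pres B0_in_S that by auto
  have T: "T = f ` S" using bij by (simp add: bij_betw_def)
  have f_eq_unit: "f U = B0' \<longleftrightarrow> U = B0" if "U \<in> S" for U
    using bij B0_in_S that \<open>f B0 = B0'\<close> by (auto simp: bij_betw_def inj_on_def)
  show "has_thin_symmetric_set G S B0 \<longleftrightarrow> has_thin_symmetric_set H T B0'"
    unfolding has_thin_symmetric_set_def T using pres_unit f_eq_unit by auto
  show "symmetric_sring G S B0 \<longleftrightarrow> symmetric_sring H T B0'"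
    unfolding symmetric_sring_def T using pres_unit by auto
qed

text \<open>If \<open>(x, y)\<close> is the only pair in \<open>U \<times> U\<close> with \<open>x y = 1\<close>, then so is \<open>(y, x)\<close>, hence \<open>y = x\<close>.\<close>

lemma (in group) unique_inverse_pair_involution:
  assumes "U \<subseteq> carrier G" "card {(x, y). x \<in> U \<and> y \<in> U \<and> x \<otimes> y = \<one>} = 1"
  obtains x where "x \<in> U" "x \<otimes> x = \<one>" "\<And>y. y \<in> U \<Longrightarrow> y \<otimes> y = \<one> \<Longrightarrow> y = x"
proof -
  obtain p where p: "{(x, y). x \<in> U \<and> y \<in> U \<and> x \<otimes> y = \<one>} = {p}"
    using assms(2) by (rule card_1_singletonE)
  obtain x y where "p = (x, y)" by (cases p)
  with p have pairs: "{(x, y). x \<in> U \<and> y \<in> U \<and> x \<otimes> y = \<one>} = {(x, y)}" by simp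
  then have "x \<in> U" "y \<in> U" "x \<otimes> y = \<one>" by blast+
  then have "y \<otimes> x = \<one>" using inv_comm assms(1) by blast
  then have "y = x" using pairs \<open>x \<in> U\<close> \<open>y \<in> U\<close> by blast
  show ?thesis
  proof
    show "x \<in> U" "x \<otimes> x = \<one>" using \<open>x \<in> U\<close> \<open>x \<otimes> y = \<one>\<close> \<open>y = x\<close> by simp_all
    show "z = x" if "z \<in> U" "z \<otimes> z = \<one>" for z using that pairs by blast
  qed
qed

section \<open>Automorphisms of a group\<close>

lemma AutoGroup_carrier: "carrier (AutoGroup G) = auto G"
  by (simp add: AutoGroup_def)

lemma AutoGroup_mult_apply:
  "a \<in> auto G \<Longrightarrow> b \<in> auto G \<Longrightarrow> x \<in> carrier G \<Longrightarrow> (a \<otimes>\<^bsub>AutoGroup G\<^esub> b) x = a (b x)"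
  by (auto simp: AutoGroup_def BijGroup_def auto_def compose_def)

lemma AutoGroup_one: "\<one>\<^bsub>AutoGroup G\<^esub> = (\<lambda>x\<in>carrier G. x)"
  by (simp add: AutoGroup_def BijGroup_def)

lemma AutoGroup_one_apply: "x \<in> carrier G \<Longrightarrow> \<one>\<^bsub>AutoGroup G\<^esub> x = x"
  by (simp add: AutoGroup_one)

lemma auto_closed: "a \<in> auto G \<Longrightarrow> x \<in> carrier G \<Longrightarrow> a x \<in> carrier G"
  by (auto simp: auto_def hom_def)

lemma finite_auto:
  assumes "finite (carrier G)"
  shows "finite (auto G)"
proof (rule finite_subset)
  show "auto G \<subseteq> carrier G \<rightarrow>\<^sub>E carrier G"
  proof (intro subsetI PiE_I)
    fix a x assume "a \<in> auto G"
    then show "x \<in> carrier G \<Longrightarrow> a x \<in> carrier G" and "x \<notin> carrier G \<Longrightarrow> a x = undefined"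
      by (auto simp: auto_def hom_def Bij_def extensional_def)
  qed
  show "finite (carrier G \<rightarrow>\<^sub>E carrier G)" using assms by (simp add: finite_PiE)
qed

definition inv_map :: "('a, 'm) monoid_scheme \<Rightarrow> 'a \<Rightarrow> 'a" where
  "inv_map G = (\<lambda>x\<in>carrier G. inv\<^bsub>G\<^esub> x)"

context group
begin

lemma auto_group_hom: "a \<in> auto G \<Longrightarrow> group_hom G G a"
  by (simp add: group_hom_def group_hom_axioms_def auto_def is_group)

lemma auto_one: "a \<in> auto G \<Longrightarrow> a \<one> = \<one>"
  using group_hom.hom_one[OF auto_group_hom] .

lemma auto_int_pow: "a \<in> auto G \<Longrightarrow> x \<in> carrier G \<Longrightarrow> a (x [^] (i::int)) = a x [^] i"
  using group_hom.hom_int_pow[OF auto_group_hom] by blast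

lemma auto_eq_on_generator:
  assumes gen: "g \<in> carrier G" "carrier G = range (\<lambda>n::int. g [^] n)"
    and "a \<in> auto G" "b \<in> auto G" "a g = b g"
  shows "a = b"
proof (rule extensionalityI)
  show "a \<in> extensional (carrier G)" "b \<in> extensional (carrier G)"
    using assms by (simp_all add: auto_def Bij_def)
next
  fix x assume "x \<in> carrier G"
  then obtain i :: int where "x = g [^] i" using gen by blast
  then show "a x = b x" using assms by (simp add: auto_int_pow)
qed

lemma square_eq_one_odd_order:
  assumes "odd (order G)" "x \<in> carrier G" "x \<otimes> x = \<one>"
  shows "x = \<one>"
proof -
  have "x [^] (2::nat) = \<one>" using assms by (simp add: numeral_eq_Suc)
  then have "ord x dvd 2" using pow_eq_id[OF assms(2)] by simp
  moreover have "ord x \<noteq> 0" using \<open>ord x dvd 2\<close> by (intro notI) simp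
  ultimately have "ord x \<in> {1, 2}" using dvd_imp_le[of "ord x" 2] by auto
  moreover have "ord x \<noteq> 2" using ord_dvd_group_order[OF assms(2)] assms(1) by auto
  ultimately have "ord x = 1" by blast
  then show ?thesis using ord_eq_1[OF assms(2)] by simp
qed

end

lemma (in comm_group) inv_map_auto: "inv_map G \<in> auto G"
proof -
  have "inv_map G \<in> hom G G" by (auto simp: hom_def inv_map_def inv_mult)
  moreover have "bij_betw (inv_map G) (carrier G) (carrier G)"
    by (rule bij_betw_byWitness[where f' = "inv_map G"]) (auto simp: inv_map_def)
  ultimately show ?thesis by (simp add: auto_def Bij_def inv_map_def)
qed

text \<open>An automorphism of order dividing 2 of \<open>\<int>/p\<close> is multiplication by a square root of 1
  modulo \<open>p\<close>, that is, by \<open>\<plusminus>1\<close>.\<close>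

lemma (in group) involutive_auto_of_prime_cyclic:
  assumes cyclic: "cyclic_group G" and prime: "Factorial_Ring.prime (order G)"
    and a: "a \<in> auto G" "a \<otimes>\<^bsub>AutoGroup G\<^esub> a = \<one>\<^bsub>AutoGroup G\<^esub>"
  shows "a = \<one>\<^bsub>AutoGroup G\<^esub> \<or> a = inv_map G"
proof -
  obtain g where g: "g \<in> carrier G" "carrier G = range (\<lambda>n::int. g [^] n)"
    using cyclic cyclic_group by blast
  have ord_g: "ord g = order G"
    using generate_pow_card[OF g(1)] generate_pow[OF g(1)] g(2)
    by (simp add: order_def full_SetCompr_eq)
  obtain z :: int where z: "a g = g [^] z" using auto_closed[OF a(1) g(1)] g(2) by auto
  have "g [^] (z * z) = g [^] (1::int)"
  proof -
    have "a (a g) = g"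
      using AutoGroup_mult_apply[OF a(1) a(1) g(1)] a(2) g(1) by (simp add: AutoGroup_one)
    moreover have "a (a g) = g [^] (z * z)"
      using z auto_int_pow[OF a(1) g(1)] by (simp add: int_pow_pow g(1))
    ultimately show ?thesis using g(1) by simp
  qed
  then have "int (order G) dvd (1 - z) * (1 + z)"
    using int_pow_eq[OF g(1)] ord_g by (simp add: algebra_simps)
  then have "int (order G) dvd 1 - z \<or> int (order G) dvd 1 + z"
    using prime by (simp add: prime_dvd_mult_iff)
  then have "a g = \<one>\<^bsub>AutoGroup G\<^esub> g \<or> a g = inv_map G g"
  proof
    assume "int (order G) dvd 1 - z"
    then have "a g = g [^] (1::int)" using z int_pow_eq[OF g(1)] ord_g by simp
    then show ?thesis using g(1) by (simp add: AutoGroup_one)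
  next
    assume "int (order G) dvd 1 + z"
    moreover have "- 1 - z = - (1 + z)" by simp
    ultimately have "int (order G) dvd - 1 - z" by (simp only: dvd_minus_iff)
    then have "a g = g [^] (-1::int)" using z int_pow_eq[OF g(1)] ord_g by simp
    then show ?thesis using g(1) by (simp add: inv_map_def int_pow_neg)
  qed
  moreover have "\<one>\<^bsub>AutoGroup G\<^esub> \<in> auto G" "inv_map G \<in> auto G"
    using id_in_auto comm_group.inv_map_auto[OF cyclic_imp_abelian_group[OF cyclic]]
    by (simp_all add: AutoGroup_one)
  ultimately show ?thesis using auto_eq_on_generator[OF g a(1)] by blast
qed

section \<open>The group \<open>A(\<langle>\<sigma>\<rangle>, K, \<psi>)\<close>\<close>

locale Apsi_setting =
  fixes P :: "('p, 'z) monoid_scheme" and K :: "('p \<Rightarrow> 'p) set" and \<theta> :: "'p \<Rightarrow> 'p"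
    and M :: "('p \<Rightarrow> 'p) set"
  assumes group_P: "group P" and finite_P: "finite (carrier P)"
    and subgroup_K: "subgroup K (AutoGroup P)"
    and theta_in_K: "\<theta> \<in> K" and K_generated: "generate (AutoGroup P) {\<theta>} = K"
    and subgroup_M: "subgroup M (AutoGroup P)" and M_subset_K: "M \<subseteq> K"
begin

abbreviation Aut where "Aut \<equiv> AutoGroup P"

sublocale P: group P by (rule group_P)
sublocale Aut: group Aut by (rule P.AutoGroup)

lemma K_subset_auto: "K \<subseteq> auto P"
  using subgroup.subset[OF subgroup_K] by (simp add: AutoGroup_carrier)

lemma finite_K: "finite K"
  using K_subset_auto finite_auto[OF finite_P] by (rule finite_subset)

lemma theta_carrier: "\<theta> \<in> carrier Aut"
  using theta_in_K K_subset_auto by (auto simp: AutoGroup_carrier)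

lemma ord_theta: "Aut.ord \<theta> = card K"
  using Aut.generate_pow_card[OF theta_carrier] K_generated by simp

lemma card_K_pos: "card K > 0"
  using finite_K theta_in_K card_gt_0_iff by blast

lemma K_eq_powers: "K = range (\<lambda>k::nat. \<theta> [^]\<^bsub>Aut\<^esub> k)"
  using Aut.generate_pow_nat[OF theta_carrier] ord_theta card_K_pos K_generated by auto

lemma pow_in_K [simp]: "\<theta> [^]\<^bsub>Aut\<^esub> (k::nat) \<in> K"
  by (subst K_eq_powers) blast

lemma pow_card_K: "\<theta> [^]\<^bsub>Aut\<^esub> card K = \<one>\<^bsub>Aut\<^esub>"
  using Aut.pow_ord_eq_1[OF theta_carrier] ord_theta by simp

lemma K_commute:
  assumes "a \<in> K" "b \<in> K"
  shows "a \<otimes>\<^bsub>Aut\<^esub> b = b \<otimes>\<^bsub>Aut\<^esub> a"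
proof -
  obtain i j :: nat where "a = \<theta> [^]\<^bsub>Aut\<^esub> i" "b = \<theta> [^]\<^bsub>Aut\<^esub> j"
    using assms K_eq_powers by blast
  then show ?thesis using Aut.nat_pow_mult[OF theta_carrier] by (simp add: add.commute)
qed

lemma M_carrier: "m \<in> M \<Longrightarrow> m \<in> carrier Aut"
  using subgroup.mem_carrier[OF subgroup_M] .

lemma mult_pow_in_K: "m \<in> M \<Longrightarrow> m \<otimes>\<^bsub>Aut\<^esub> \<theta> [^]\<^bsub>Aut\<^esub> (k::nat) \<in> K"
  by (rule subgroup.m_closed[OF subgroup_K]) (use M_subset_K in auto)

lemma mult_pow_auto: "m \<in> M \<Longrightarrow> m \<otimes>\<^bsub>Aut\<^esub> \<theta> [^]\<^bsub>Aut\<^esub> (k::nat) \<in> auto P"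
  using mult_pow_in_K K_subset_auto by blast

lemma mult_pow_mult_pow:
  assumes "m \<in> M" "m' \<in> M"
  shows "(m' \<otimes>\<^bsub>Aut\<^esub> \<theta> [^]\<^bsub>Aut\<^esub> j) \<otimes>\<^bsub>Aut\<^esub> (m \<otimes>\<^bsub>Aut\<^esub> \<theta> [^]\<^bsub>Aut\<^esub> k)
    = (m' \<otimes>\<^bsub>Aut\<^esub> m) \<otimes>\<^bsub>Aut\<^esub> \<theta> [^]\<^bsub>Aut\<^esub> (j + k :: nat)"
proof -
  have carrier: "m \<in> carrier Aut" "m' \<in> carrier Aut" "\<And>i::nat. \<theta> [^]\<^bsub>Aut\<^esub> i \<in> carrier Aut"
    using assms M_carrier theta_carrier by auto
  have commute: "\<theta> [^]\<^bsub>Aut\<^esub> j \<otimes>\<^bsub>Aut\<^esub> m = m \<otimes>\<^bsub>Aut\<^esub> \<theta> [^]\<^bsub>Aut\<^esub> j"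
    using K_commute[OF pow_in_K] assms M_subset_K by blast
  have "(m' \<otimes>\<^bsub>Aut\<^esub> \<theta> [^]\<^bsub>Aut\<^esub> j) \<otimes>\<^bsub>Aut\<^esub> (m \<otimes>\<^bsub>Aut\<^esub> \<theta> [^]\<^bsub>Aut\<^esub> k)
      = m' \<otimes>\<^bsub>Aut\<^esub> ((\<theta> [^]\<^bsub>Aut\<^esub> j \<otimes>\<^bsub>Aut\<^esub> m) \<otimes>\<^bsub>Aut\<^esub> \<theta> [^]\<^bsub>Aut\<^esub> k)"
    using carrier by (simp only: Aut.m_assoc Aut.m_closed)
  also have "\<dots> = (m' \<otimes>\<^bsub>Aut\<^esub> m) \<otimes>\<^bsub>Aut\<^esub> (\<theta> [^]\<^bsub>Aut\<^esub> j \<otimes>\<^bsub>Aut\<^esub> \<theta> [^]\<^bsub>Aut\<^esub> k)"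
    using carrier by (simp only: commute Aut.m_assoc Aut.m_closed)
  finally show ?thesis by (simp only: Aut.nat_pow_mult[OF theta_carrier])
qed

text \<open>Since \<open>K\<close> is abelian, \<open>y M = M \<theta>\<^sup>k\<close> just says \<open>y \<in> M \<theta>\<^sup>k\<close>.\<close>

lemma Apsi_eq: "Apsi \<sigma> P K \<theta> M = {(\<sigma> ^^ k, m \<otimes>\<^bsub>Aut\<^esub> \<theta> [^]\<^bsub>Aut\<^esub> k) | k m. m \<in> M}"
proof -
  have "y <#\<^bsub>Aut\<^esub> M = M #>\<^bsub>Aut\<^esub> \<theta> [^]\<^bsub>Aut\<^esub> k \<longleftrightarrow> y \<in> M #>\<^bsub>Aut\<^esub> \<theta> [^]\<^bsub>Aut\<^esub> k"
    if "y \<in> K" for y and k :: nat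
  proof -
    have y: "y \<in> carrier Aut" using that K_subset_auto by (auto simp: AutoGroup_carrier)
    have "y <#\<^bsub>Aut\<^esub> M = M #>\<^bsub>Aut\<^esub> y"
      unfolding l_coset_def r_coset_def using K_commute that M_subset_K by blast
    moreover have "y \<in> M #>\<^bsub>Aut\<^esub> y" using Aut.rcos_self[OF y subgroup_M] .
    ultimately show ?thesis
      using Aut.repr_independence[OF _ _ subgroup_M] theta_carrier by (metis Aut.nat_pow_closed)
  qed
  moreover have "m \<otimes>\<^bsub>Aut\<^esub> \<theta> [^]\<^bsub>Aut\<^esub> (k::nat) \<in> K" if "m \<in> M" for m k
    using mult_pow_in_K that .
  ultimately show ?thesis
    unfolding Apsi_def r_coset_def by blast
qed

lemma inv_map_in_K:
  assumes "cyclic_group P" "Factorial_Ring.prime (order P)" "even (card K)"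
  shows "inv_map P \<in> K"
proof -
  obtain r where r: "card K = 2 * r" using assms(3) by blast
  define \<alpha> where "\<alpha> = \<theta> [^]\<^bsub>Aut\<^esub> r"
  have "\<alpha> \<in> K" unfolding \<alpha>_def by simp
  moreover have "\<alpha> \<noteq> \<one>\<^bsub>Aut\<^esub>"
    using Aut.pow_eq_id[OF theta_carrier, of r] ord_theta r card_K_pos
    by (auto simp: \<alpha>_def dest: dvd_imp_le)
  moreover have "\<alpha> \<otimes>\<^bsub>Aut\<^esub> \<alpha> = \<one>\<^bsub>Aut\<^esub>"
    using pow_card_K r theta_carrier by (simp add: \<alpha>_def Aut.nat_pow_mult mult_2)
  ultimately show ?thesis
    using P.involutive_auto_of_prime_cyclic[OF assms(1,2)] K_subset_auto by blast
qed

end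

locale Apsi_index_two = Apsi_setting +
  assumes card_K_eq: "card K = 2 * card M"
begin

lemma finite_M: "finite M"
  using M_subset_K finite_K by (rule finite_subset)

lemma theta_not_in_M: "\<theta> \<notin> M"
proof
  assume "\<theta> \<in> M"
  then have "K \<subseteq> M" using Aut.generate_subgroup_incl[OF _ subgroup_M] K_generated by blast
  then have "card K \<le> card M" using card_mono[OF finite_M] by blast
  then show False
    using card_K_eq subgroup.finite_imp_card_positive[OF subgroup_M] finite_auto[OF finite_P]
    by (simp add: AutoGroup_carrier)
qed

text \<open>\<open>M\<close> and \<open>M \<theta>\<close> are disjoint and each has half the size of \<open>K\<close>.\<close>

lemma not_in_M_coset:
  assumes "y \<in> K" "y \<notin> M"
  shows "\<exists>m\<in>M. y = m \<otimes>\<^bsub>Aut\<^esub> \<theta>"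
proof -
  let ?C = "(\<lambda>m. m \<otimes>\<^bsub>Aut\<^esub> \<theta>) ` M"
  have C_subset: "?C \<subseteq> K" using subgroup.m_closed[OF subgroup_K] M_subset_K theta_in_K by blast
  have "inj_on (\<lambda>m. m \<otimes>\<^bsub>Aut\<^esub> \<theta>) M"
    by (rule inj_onI) (use M_carrier theta_carrier Aut.r_cancel in blast)
  then have card_C: "card ?C = card M" by (rule card_image)
  have "M \<inter> ?C = {}"
  proof (rule ccontr)
    assume "M \<inter> ?C \<noteq> {}"
    then obtain m where m: "m \<in> M" "m \<otimes>\<^bsub>Aut\<^esub> \<theta> \<in> M" by blast
    then have "inv\<^bsub>Aut\<^esub> m \<otimes>\<^bsub>Aut\<^esub> (m \<otimes>\<^bsub>Aut\<^esub> \<theta>) \<in> M"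
      using subgroup.m_closed[OF subgroup_M subgroup.m_inv_closed[OF subgroup_M]] by blast
    then show False
      using theta_not_in_M M_carrier[OF m(1)] theta_carrier by (simp add: Aut.m_assoc[symmetric])
  qed
  then have "card (M \<union> ?C) = card K"
    using card_Un_disjoint[OF finite_M finite_subset[OF C_subset finite_K]] card_C card_K_eq by simp
  then have "M \<union> ?C = K" using card_subset_eq[OF finite_K] C_subset M_subset_K by blast
  then show ?thesis using assms by blast
qed

lemma mult_in_M_iff_left:
  assumes "a \<in> carrier Aut" "b \<in> M"
  shows "a \<otimes>\<^bsub>Aut\<^esub> b \<in> M \<longleftrightarrow> a \<in> M"
  using subgroup.m_closed[OF subgroup_M _ subgroup.m_inv_closed[OF subgroup_M]]
    subgroup.m_closed[OF subgroup_M] assms M_carrier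
  by (metis Aut.inv_solve_right Aut.m_closed)

lemma pow_two_in_M: "\<theta> [^]\<^bsub>Aut\<^esub> (2::nat) \<in> M"
proof (rule ccontr)
  assume "\<theta> [^]\<^bsub>Aut\<^esub> (2::nat) \<notin> M"
  then obtain m where "m \<in> M" "\<theta> [^]\<^bsub>Aut\<^esub> (2::nat) = m \<otimes>\<^bsub>Aut\<^esub> \<theta>"
    using not_in_M_coset[OF pow_in_K] by blast
  then show False
    using theta_not_in_M theta_carrier M_carrier Aut.r_cancel by (simp add: numeral_eq_Suc)
qed

lemma pow_in_M_iff: "\<theta> [^]\<^bsub>Aut\<^esub> (k::nat) \<in> M \<longleftrightarrow> even k"
proof (induction k rule: nat_induct2)
  case 0
  then show ?case using subgroup.one_closed[OF subgroup_M] by simp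
next
  case 1
  then show ?case using theta_not_in_M theta_carrier by simp
next
  case (step k)
  have "\<theta> [^]\<^bsub>Aut\<^esub> (k + 2) = \<theta> [^]\<^bsub>Aut\<^esub> k \<otimes>\<^bsub>Aut\<^esub> \<theta> [^]\<^bsub>Aut\<^esub> (2::nat)"
    using Aut.nat_pow_mult[OF theta_carrier] by simp
  then show ?case
    using step pow_two_in_M mult_in_M_iff_left[OF Aut.nat_pow_closed[OF theta_carrier]] by simp
qed

lemma mult_in_M_iff:
  assumes "a \<in> K" "b \<in> K"
  shows "a \<otimes>\<^bsub>Aut\<^esub> b \<in> M \<longleftrightarrow> (a \<in> M \<longleftrightarrow> b \<in> M)"
proof -
  obtain i j :: nat where "a = \<theta> [^]\<^bsub>Aut\<^esub> i" "b = \<theta> [^]\<^bsub>Aut\<^esub> j"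
    using assms K_eq_powers by blast
  then show ?thesis using pow_in_M_iff by (simp add: Aut.nat_pow_mult theta_carrier)
qed

lemma mult_pow_in_M_iff: "m \<in> M \<Longrightarrow> m \<otimes>\<^bsub>Aut\<^esub> \<theta> [^]\<^bsub>Aut\<^esub> (k::nat) \<in> M \<longleftrightarrow> even k"
  using mult_in_M_iff[OF _ pow_in_K] M_subset_K pow_in_M_iff by auto

text \<open>If \<open>u g \<cdot> w g = 1\<close> for a generator \<open>g\<close> of \<open>P\<close>, then \<open>u = \<iota> w\<close> with \<open>\<iota>\<close> the inversion map.\<close>

lemma inv_map_in_M_iff:
  assumes gen: "g \<in> carrier P" "carrier P = range (\<lambda>n::int. g [^]\<^bsub>P\<^esub> n)"
    and "u \<in> K" "w \<in> K" "u g \<otimes>\<^bsub>P\<^esub> w g = \<one>\<^bsub>P\<^esub>"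
  shows "inv_map P \<in> M \<longleftrightarrow> (u \<in> M \<longleftrightarrow> w \<in> M)"
proof -
  have auto: "u \<in> auto P" "w \<in> auto P" using assms(3,4) K_subset_auto by auto
  have "comm_group P" using P.cyclic_imp_abelian_group P.cyclic_group gen by blast
  then have inv_map: "inv_map P \<in> auto P" by (rule comm_group.inv_map_auto)
  have "u g = inv\<^bsub>P\<^esub> (w g)"
    using P.inv_equality[OF assms(5) auto_closed[OF auto(2) gen(1)] auto_closed[OF auto(1) gen(1)]]
    by (rule sym)
  moreover have "(inv_map P \<otimes>\<^bsub>Aut\<^esub> w) g = inv\<^bsub>P\<^esub> (w g)"
    using AutoGroup_mult_apply[OF inv_map auto(2) gen(1)] auto_closed[OF auto(2) gen(1)]
    by (simp add: inv_map_def)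
  moreover have "inv_map P \<otimes>\<^bsub>Aut\<^esub> w \<in> auto P"
    using Aut.m_closed inv_map auto(2) by (simp add: AutoGroup_carrier)
  ultimately have "u = inv_map P \<otimes>\<^bsub>Aut\<^esub> w"
    using P.auto_eq_on_generator[OF gen auto(1)] by simp
  moreover have "inv_map P \<in> K"
  proof -
    have "inv_map P = u \<otimes>\<^bsub>Aut\<^esub> inv\<^bsub>Aut\<^esub> w"
      using Aut.inv_solve_right inv_map auto \<open>u = inv_map P \<otimes>\<^bsub>Aut\<^esub> w\<close>
      by (simp add: AutoGroup_carrier)
    then show ?thesis
      using subgroup.m_closed[OF subgroup_K assms(3) subgroup.m_inv_closed[OF subgroup_K assms(4)]]
      by simp
  qed
  ultimately show ?thesis using mult_in_M_iff assms(4) by auto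
qed

lemma index_two_subgroup_unique:
  assumes "Apsi_index_two P K \<theta> M'"
  shows "M' = M"
proof -
  interpret M': Apsi_index_two P K \<theta> M' by fact
  have "x \<in> M' \<longleftrightarrow> x \<in> M" if "x \<in> K" for x
    using that K_eq_powers pow_in_M_iff M'.pow_in_M_iff by auto
  then show ?thesis using M_subset_K M'.M_subset_K by blast
qed

end

lemma index_subgroup_Apsi_setting:
  assumes "group P" "finite (carrier P)" "subgroup K (AutoGroup P)"
    and "\<theta> \<in> K" "generate (AutoGroup P) {\<theta>} = K" "index_subgroup P K M n"
  shows "Apsi_setting P K \<theta> M"
  using assms unfolding index_subgroup_def Apsi_setting_def by blast

lemma index_subgroup_Apsi_index_two:
  assumes "group P" "finite (carrier P)" "subgroup K (AutoGroup P)"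
    and "\<theta> \<in> K" "generate (AutoGroup P) {\<theta>} = K" "index_subgroup P K M 2"
  shows "Apsi_index_two P K \<theta> M"
  using index_subgroup_Apsi_setting[OF assms] assms(6)
  unfolding index_subgroup_def Apsi_index_two_def Apsi_index_two_axioms_def by blast

section \<open>The orbit S-ring \<open>Cyc(A(\<langle>\<sigma>\<rangle>, K, \<psi>), E \<times> P)\<close>\<close>

locale Apsi_orbits = Apsi_setting P K \<theta> M
  for P :: "('p, 'z) monoid_scheme" and K \<theta> M +
  fixes E :: "('e, 'w) monoid_scheme" and \<sigma> :: "'e \<Rightarrow> 'e"
  assumes group_E: "group E" and finite_E: "finite (carrier E)"
    and sigma_closed: "x \<in> carrier E \<Longrightarrow> \<sigma> x \<in> carrier E"
    and sigma_one: "\<sigma> \<one>\<^bsub>E\<^esub> = \<one>\<^bsub>E\<^esub>"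
    and sigma_periodic: "\<exists>n>0. \<forall>x\<in>carrier E. (\<sigma> ^^ n) x = x"
begin

abbreviation G where "G \<equiv> E \<times>\<times> P"

sublocale G: group G using DirProd_group[OF group_E group_P] .

definition act :: "nat \<Rightarrow> ('p \<Rightarrow> 'p) \<Rightarrow> 'e \<times> 'p \<Rightarrow> 'e \<times> 'p" where
  "act k m g = ((\<sigma> ^^ k) (fst g), (m \<otimes>\<^bsub>Aut\<^esub> \<theta> [^]\<^bsub>Aut\<^esub> k) (snd g))"

definition orbit :: "'e \<times> 'p \<Rightarrow> ('e \<times> 'p) set" where
  "orbit g = {act k m g | k m. m \<in> M}"

lemma SA_eq_orbits: "SA E \<sigma> P K \<theta> M = orbit ` carrier G"
proof -
  have "(\<lambda>f. f g) ` prod_aut ` Apsi \<sigma> P K \<theta> M = orbit g" for g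
    unfolding Apsi_eq orbit_def act_def prod_aut_def by (auto simp: image_iff; blast)
  then show ?thesis unfolding SA_def Cyc_def by simp
qed

lemma sigma_pow_closed: "x \<in> carrier E \<Longrightarrow> (\<sigma> ^^ k) x \<in> carrier E"
  by (induction k) (auto simp: sigma_closed)

lemma sigma_pow_one: "(\<sigma> ^^ k) \<one>\<^bsub>E\<^esub> = \<one>\<^bsub>E\<^esub>"
  by (induction k) (auto simp: sigma_one)

lemma act_closed: "g \<in> carrier G \<Longrightarrow> m \<in> M \<Longrightarrow> act k m g \<in> carrier G"
  using sigma_pow_closed auto_closed[OF mult_pow_auto] by (auto simp: act_def mem_Times_iff)

lemma act_act:
  assumes "g \<in> carrier G" "m \<in> M" "m' \<in> M"
  shows "act j m' (act k m g) = act (j + k) (m' \<otimes>\<^bsub>Aut\<^esub> m) g"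
proof -
  have "snd g \<in> carrier P" using assms(1) by (auto simp: mem_Times_iff)
  then show ?thesis
    using AutoGroup_mult_apply[OF mult_pow_auto[OF assms(3)] mult_pow_auto[OF assms(2)]]
      mult_pow_mult_pow[OF assms(2,3)]
    by (simp add: act_def funpow_add)
qed

lemma act_zero_one: "g \<in> carrier G \<Longrightarrow> act 0 \<one>\<^bsub>Aut\<^esub> g = g"
  by (auto simp: act_def AutoGroup_one_apply mem_Times_iff)

lemma act_periodic: "\<exists>L>0. \<forall>k. \<forall>g\<in>carrier G. act (L * k) \<one>\<^bsub>Aut\<^esub> g = g"
proof -
  obtain n where n: "n > 0" "\<And>x. x \<in> carrier E \<Longrightarrow> (\<sigma> ^^ n) x = x"
    using sigma_periodic by blast
  have sigma: "(\<sigma> ^^ (n * t)) x = x" if "x \<in> carrier E" for t x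
    unfolding funpow_mult[symmetric] by (induction t) (simp_all add: n that)
  have theta: "\<theta> [^]\<^bsub>Aut\<^esub> (card K * t) = \<one>\<^bsub>Aut\<^esub>" for t
    using Aut.nat_pow_pow[OF theta_carrier] pow_card_K by (metis Aut.nat_pow_one)
  have "act (n * card K * k) \<one>\<^bsub>Aut\<^esub> g = g" if "g \<in> carrier G" for k g
    using sigma[of "fst g" "card K * k"] theta[of "n * k"] that
    by (auto simp: act_def AutoGroup_one_apply mem_Times_iff ac_simps)
  then show ?thesis using n(1) card_K_pos by (metis nat_0_less_mult_iff)
qed

lemma orbit_self: "g \<in> carrier G \<Longrightarrow> g \<in> orbit g"
  using act_zero_one[symmetric] subgroup.one_closed[OF subgroup_M] unfolding orbit_def by blast

lemma orbit_subset: "g \<in> carrier G \<Longrightarrow> orbit g \<subseteq> carrier G"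
  unfolding orbit_def using act_closed by blast

lemma finite_orbit: "g \<in> carrier G \<Longrightarrow> finite (orbit g)"
  using orbit_subset finite_subset finite_E finite_P by (metis carrier_DirProd finite_SigmaI)

lemma orbit_trans:
  assumes "g \<in> carrier G" "h \<in> orbit g"
  shows "orbit h \<subseteq> orbit g"
proof
  fix x assume "x \<in> orbit h"
  obtain k m where km: "m \<in> M" "h = act k m g" using assms(2) unfolding orbit_def by blast
  obtain j m' where jm: "m' \<in> M" "x = act j m' h" using \<open>x \<in> orbit h\<close> unfolding orbit_def by blast
  have "x = act (j + k) (m' \<otimes>\<^bsub>Aut\<^esub> m) g" using act_act[OF assms(1) km(1) jm(1)] km jm by simp
  moreover have "m' \<otimes>\<^bsub>Aut\<^esub> m \<in> M" using subgroup.m_closed[OF subgroup_M jm(1) km(1)] .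
  ultimately show "x \<in> orbit g" unfolding orbit_def by blast
qed

text \<open>Going around a full period \<open>L\<close> undoes \<open>act k m\<close>, so \<open>act ((L - 1) k) m\<inverse>\<close> is its inverse.\<close>

lemma orbit_sym:
  assumes "g \<in> carrier G" "h \<in> orbit g"
  shows "g \<in> orbit h"
proof -
  obtain k m where km: "m \<in> M" "h = act k m g" using assms(2) unfolding orbit_def by blast
  obtain L where L: "L > 0" "\<And>g. g \<in> carrier G \<Longrightarrow> act (L * k) \<one>\<^bsub>Aut\<^esub> g = g"
    using act_periodic by blast
  have inv_m: "inv\<^bsub>Aut\<^esub> m \<in> M" using subgroup.m_inv_closed[OF subgroup_M km(1)] .
  have "(L - 1) * k + k = L * k" using L(1) by (simp add: algebra_simps)
  then have "act ((L - 1) * k) (inv\<^bsub>Aut\<^esub> m) h = act (L * k) \<one>\<^bsub>Aut\<^esub> g"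
    using act_act[OF assms(1) km(1) inv_m] km(2) Aut.l_inv[OF M_carrier[OF km(1)]] by simp
  also have "\<dots> = g" using L(2) assms(1) .
  finally show ?thesis using inv_m unfolding orbit_def by blast
qed

lemma orbit_eq: "g \<in> carrier G \<Longrightarrow> h \<in> orbit g \<Longrightarrow> orbit h = orbit g"
  using orbit_trans orbit_sym orbit_subset by (meson subsetD subset_antisym)

lemma orbit_one: "orbit \<one>\<^bsub>G\<^esub> = {\<one>\<^bsub>G\<^esub>}"
proof -
  have "act k m \<one>\<^bsub>G\<^esub> = \<one>\<^bsub>G\<^esub>" if "m \<in> M" for k m
    using sigma_pow_one P.auto_one[OF mult_pow_auto[OF that]] by (simp add: act_def)
  then show ?thesis using orbit_self[OF G.one_closed] unfolding orbit_def by blast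
qed

lemma unit_basic_set_one: "is_unit_basic_set G (SA E \<sigma> P K \<theta> M) {\<one>\<^bsub>G\<^esub>}"
  unfolding is_unit_basic_set_def
proof (intro conjI ballI)
  show "{\<one>\<^bsub>G\<^esub>} \<in> SA E \<sigma> P K \<theta> M" unfolding SA_eq_orbits using orbit_one G.one_closed by force
next
  fix Y Z assume "Y \<in> SA E \<sigma> P K \<theta> M" "Z \<in> SA E \<sigma> P K \<theta> M"
  then obtain h g where h: "h \<in> carrier G" "Y = orbit h" and g: "g \<in> carrier G" "Z = orbit g"
    unfolding SA_eq_orbits by blast
  define z where "z = (SOME z. z \<in> Z)"
  have "z \<in> Z" unfolding z_def using orbit_self[OF g(1)] g(2) by (metis someI_ex)
  then have z_in_Y: "z \<in> Y \<longleftrightarrow> Y = Z" using orbit_eq g h by metis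
  have "\<one>\<^bsub>G\<^esub> \<otimes>\<^bsub>G\<^esub> y = y" if "y \<in> Y" for y
    using that orbit_subset[OF h(1)] h(2) G.l_one by blast
  then have "{(x, y). x \<in> {\<one>\<^bsub>G\<^esub>} \<and> y \<in> Y \<and> x \<otimes>\<^bsub>G\<^esub> y = z} = (if z \<in> Y then {(\<one>\<^bsub>G\<^esub>, z)} else {})"
    by (auto simp del: one_DirProd)
  then show "struct_const G {\<one>\<^bsub>G\<^esub>} Y Z = (if Y = Z then 1 else 0)"
    unfolding struct_const_def z_def[symmetric] z_in_Y by simp
qed

lemma unit_basic_set_iff: "is_unit_basic_set G (SA E \<sigma> P K \<theta> M) B \<longleftrightarrow> B = {\<one>\<^bsub>G\<^esub>}"
proof
  assume unit: "is_unit_basic_set G (SA E \<sigma> P K \<theta> M) B"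
  then obtain g where g: "g \<in> carrier G" "B = orbit g"
    unfolding is_unit_basic_set_def SA_eq_orbits by blast
  have "struct_const G (orbit g) {\<one>\<^bsub>G\<^esub>} {\<one>\<^bsub>G\<^esub>} = 1"
    using unit unit_basic_set_one g(2) unfolding is_unit_basic_set_def by simp
  then obtain x where x: "x \<in> orbit g" "x \<otimes>\<^bsub>G\<^esub> \<one>\<^bsub>G\<^esub> = \<one>\<^bsub>G\<^esub>"
    using struct_const_singleton_eq_0_iff[OF finite_orbit[OF g(1)],
        where G = G and B = "{\<one>\<^bsub>G\<^esub>}" and z = "\<one>\<^bsub>G\<^esub>"]
    by (auto simp del: one_DirProd)
  then have "x = \<one>\<^bsub>G\<^esub>" using orbit_subset[OF g(1)] by (metis G.r_one subsetD)
  then show "B = {\<one>\<^bsub>G\<^esub>}" using orbit_eq[OF g(1)] orbit_one g(2) x(1) by simp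
qed (use unit_basic_set_one in simp)

lemma orbit_of_fixed_point:
  assumes "t \<in> carrier E" "\<sigma> t = t"
  shows "orbit (t, \<one>\<^bsub>P\<^esub>) = {(t, \<one>\<^bsub>P\<^esub>)}"
proof -
  have "(\<sigma> ^^ k) t = t" for k using assms(2) by (induction k) simp_all
  then have "act k m (t, \<one>\<^bsub>P\<^esub>) = (t, \<one>\<^bsub>P\<^esub>)" if "m \<in> M" for k m
    using P.auto_one[OF mult_pow_auto[OF that]] by (simp add: act_def)
  then show ?thesis using orbit_self[of "(t, \<one>\<^bsub>P\<^esub>)"] assms(1) unfolding orbit_def by auto
qed

lemma thin_symmetric_set_of_fixed_involution:
  assumes "t \<in> carrier E" "\<sigma> t = t" "t \<otimes>\<^bsub>E\<^esub> t = \<one>\<^bsub>E\<^esub>" "t \<noteq> \<one>\<^bsub>E\<^esub>"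
  shows "has_thin_symmetric_set G (SA E \<sigma> P K \<theta> M) {\<one>\<^bsub>G\<^esub>}"
  unfolding has_thin_symmetric_set_def
proof (intro bexI conjI)
  let ?U = "{(t, \<one>\<^bsub>P\<^esub>)}"
  show "?U \<in> SA E \<sigma> P K \<theta> M"
    unfolding SA_eq_orbits using orbit_of_fixed_point[OF assms(1,2)] assms(1) by force
  show "?U \<noteq> {\<one>\<^bsub>G\<^esub>}" using assms(4) by simp
  have "{(x, y). x \<in> ?U \<and> y \<in> ?U \<and> x \<otimes>\<^bsub>G\<^esub> y = \<one>\<^bsub>G\<^esub>} = {((t, \<one>\<^bsub>P\<^esub>), (t, \<one>\<^bsub>P\<^esub>))}"
    using assms(3) by auto
  then show "struct_const G ?U ?U {\<one>\<^bsub>G\<^esub>} = 1" by (simp only: struct_const_singleton) simp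
qed

lemma symmetric_sring_iff:
  "symmetric_sring G (SA E \<sigma> P K \<theta> M) {\<one>\<^bsub>G\<^esub>} \<longleftrightarrow>
     (\<forall>g\<in>carrier G. \<exists>x\<in>orbit g. \<exists>y\<in>orbit g. x \<otimes>\<^bsub>G\<^esub> y = \<one>\<^bsub>G\<^esub>)"
proof -
  have "struct_const G (orbit g) (orbit g) {\<one>\<^bsub>G\<^esub>} \<noteq> 0 \<longleftrightarrow>
      (\<exists>x\<in>orbit g. \<exists>y\<in>orbit g. x \<otimes>\<^bsub>G\<^esub> y = \<one>\<^bsub>G\<^esub>)" if "g \<in> carrier G" for g
    using struct_const_singleton_eq_0_iff[OF finite_orbit[OF that] finite_orbit[OF that],
        where G = G and z = "\<one>\<^bsub>G\<^esub>"]
    by (simp del: one_DirProd)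
  then show ?thesis unfolding symmetric_sring_def SA_eq_orbits by blast
qed

lemma no_thin_symmetric_set:
  assumes odd: "odd (order P)"
    and square: "\<And>x. x \<in> carrier E \<Longrightarrow> x \<otimes>\<^bsub>E\<^esub> x = \<one>\<^bsub>E\<^esub>"
    and fixed_point_free: "\<And>x. x \<in> carrier E \<Longrightarrow> \<sigma> x = x \<Longrightarrow> x = \<one>\<^bsub>E\<^esub>"
  shows "\<not> has_thin_symmetric_set G (SA E \<sigma> P K \<theta> M) {\<one>\<^bsub>G\<^esub>}"
proof
  assume "has_thin_symmetric_set G (SA E \<sigma> P K \<theta> M) {\<one>\<^bsub>G\<^esub>}"
  then obtain g where g: "g \<in> carrier G" "orbit g \<noteq> {\<one>\<^bsub>G\<^esub>}"
    and "struct_const G (orbit g) (orbit g) {\<one>\<^bsub>G\<^esub>} = 1"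
    unfolding has_thin_symmetric_set_def SA_eq_orbits by blast
  then have "card {(x, y). x \<in> orbit g \<and> y \<in> orbit g \<and> x \<otimes>\<^bsub>G\<^esub> y = \<one>\<^bsub>G\<^esub>} = 1"
    by (simp only: struct_const_singleton)
  then obtain x0 where x0: "x0 \<in> orbit g" "x0 \<otimes>\<^bsub>G\<^esub> x0 = \<one>\<^bsub>G\<^esub>"
    and unique: "\<And>y. y \<in> orbit g \<Longrightarrow> y \<otimes>\<^bsub>G\<^esub> y = \<one>\<^bsub>G\<^esub> \<Longrightarrow> y = x0"
    using G.unique_inverse_pair_involution[OF orbit_subset[OF g(1)]] by blast
  obtain e r where x0_eq: "x0 = (e, r)" by fastforce
  have e: "e \<in> carrier E" and r: "r \<in> carrier P"
    using x0(1) orbit_subset[OF g(1)] x0_eq by auto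
  have "r = \<one>\<^bsub>P\<^esub>" using P.square_eq_one_odd_order[OF odd r] x0(2) x0_eq by simp
  have "e \<noteq> \<one>\<^bsub>E\<^esub>"
  proof
    assume "e = \<one>\<^bsub>E\<^esub>"
    then have "\<one>\<^bsub>G\<^esub> \<in> orbit g" using x0(1) x0_eq \<open>r = \<one>\<^bsub>P\<^esub>\<close> by simp
    then show False using orbit_eq[OF g(1)] orbit_one g(2) by simp
  qed
  define x1 where "x1 = act 1 \<one>\<^bsub>Aut\<^esub> x0"
  have x1_eq: "x1 = (\<sigma> e, \<one>\<^bsub>P\<^esub>)"
    using P.auto_one[OF mult_pow_auto[OF subgroup.one_closed[OF subgroup_M], of 1]]
    by (simp add: x1_def act_def x0_eq \<open>r = \<one>\<^bsub>P\<^esub>\<close> del: Aut.nat_pow_eone)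
  have "x1 \<in> orbit g"
    using orbit_trans[OF g(1) x0(1)] subgroup.one_closed[OF subgroup_M]
    unfolding x1_def orbit_def by blast
  moreover have "x1 \<otimes>\<^bsub>G\<^esub> x1 = \<one>\<^bsub>G\<^esub>" using square[OF sigma_closed[OF e]] x1_eq by simp
  ultimately have "x1 = x0" by (rule unique)
  then have "\<sigma> e = e" using x0_eq x1_eq by simp
  then show False using fixed_point_free[OF e] \<open>e \<noteq> \<one>\<^bsub>E\<^esub>\<close> by simp
qed

lemma symmetric_sringI:
  assumes "\<And>h. h \<in> carrier G \<Longrightarrow> \<exists>x\<in>orbit h. h \<otimes>\<^bsub>G\<^esub> x = \<one>\<^bsub>G\<^esub>"
  shows "symmetric_sring G (SA E \<sigma> P K \<theta> M) {\<one>\<^bsub>G\<^esub>}"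
  unfolding symmetric_sring_iff using assms orbit_self by blast

end

lemma (in Apsi_orbits) inverse_pair_parity:
  assumes "Apsi_index_two P K \<theta> M"
    and gen: "g \<in> carrier P" "carrier P = range (\<lambda>n::int. g [^]\<^bsub>P\<^esub> n)"
    and "x \<in> orbit (e, g)" "y \<in> orbit (e, g)" "x \<otimes>\<^bsub>G\<^esub> y = \<one>\<^bsub>G\<^esub>"
  obtains k j where "fst x = (\<sigma> ^^ k) e" "fst y = (\<sigma> ^^ j) e"
    and "inv_map P \<in> M \<longleftrightarrow> (even k \<longleftrightarrow> even j)"
proof -
  interpret Apsi_index_two P K \<theta> M by fact
  obtain k m j m' where "m \<in> M" "x = act k m (e, g)" "m' \<in> M" "y = act j m' (e, g)"
    using assms(4,5) unfolding orbit_def by blast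
  moreover have "inv_map P \<in> M \<longleftrightarrow> (even k \<longleftrightarrow> even j)"
    using inv_map_in_M_iff[OF gen mult_pow_in_K mult_pow_in_K] mult_pow_in_M_iff
      assms(6) calculation
    by (simp add: act_def mult_DirProd')
  ultimately show ?thesis using that by (simp add: act_def)
qed

section \<open>The three S-rings \<open>\<A>\<^sub>1(K)\<close>, \<open>\<A>\<^sub>2(K)\<close>, \<open>\<A>\<^sub>3(K)\<close>\<close>

lemma E1_carrier: "carrier E1 = {0..<2} \<times> {0..<2}"
  by (simp add: E1_def carrier_integer_mod_group)

lemma E1_one: "\<one>\<^bsub>E1\<^esub> = (0, 0)"
  by (simp add: E1_def)

lemma E1_mult: "x \<otimes>\<^bsub>E1\<^esub> y = ((fst x + fst y) mod 2, (snd x + snd y) mod 2)"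
  by (simp add: E1_def mult_DirProd')

lemma E1_cases: "x \<in> carrier E1 \<Longrightarrow> x = (0, 0) \<or> x = (0, 1) \<or> x = (1, 0) \<or> x = (1, 1)"
  by (auto simp: E1_carrier)

lemma E2_carrier: "carrier E2 = {0..<4}"
  by (simp add: E2_def carrier_integer_mod_group)

lemma E2_one: "\<one>\<^bsub>E2\<^esub> = 0"
  by (simp add: E2_def)

lemma E2_mult: "x \<otimes>\<^bsub>E2\<^esub> y = (x + y) mod 4"
  by (simp add: E2_def)

lemma E2_cases: "x \<in> carrier E2 \<Longrightarrow> x = 0 \<or> x = 1 \<or> x = 2 \<or> x = 3"
  by (auto simp: E2_carrier)

lemma Apsi_orbits_sigma1:
  assumes "Apsi_setting P K \<theta> M"
  shows "Apsi_orbits P K \<theta> M E1 sigma1"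
proof (intro Apsi_orbits.intro[OF assms] Apsi_orbits_axioms.intro)
  show "\<exists>n>0. \<forall>x\<in>carrier E1. (sigma1 ^^ n) x = x"
    by (rule exI[of _ 3]) (auto simp: numeral_eq_Suc sigma1_def dest!: E1_cases)
qed (auto simp: E1_def DirProd_group sigma1_def carrier_integer_mod_group)

lemma Apsi_orbits_sigma2:
  assumes "Apsi_setting P K \<theta> M"
  shows "Apsi_orbits P K \<theta> M E1 sigma2"
proof (intro Apsi_orbits.intro[OF assms] Apsi_orbits_axioms.intro)
  show "\<exists>n>0. \<forall>x\<in>carrier E1. (sigma2 ^^ n) x = x"
    by (rule exI[of _ 2]) (auto simp: numeral_eq_Suc sigma2_def)
qed (auto simp: E1_def DirProd_group sigma2_def carrier_integer_mod_group)

lemma Apsi_orbits_sigma3: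
  assumes "Apsi_setting P K \<theta> M"
  shows "Apsi_orbits P K \<theta> M E2 sigma3"
proof (intro Apsi_orbits.intro[OF assms] Apsi_orbits_axioms.intro)
  show "\<exists>n>0. \<forall>x\<in>carrier E2. (sigma3 ^^ n) x = x"
    by (rule exI[of _ 2]) (auto simp: numeral_eq_Suc sigma3_def dest!: E2_cases)
qed (auto simp: E2_def sigma3_def carrier_integer_mod_group)

lemma sigma2_pow: "(sigma2 ^^ k) (1, 0) = (if even k then (1, 0) else (0, 1))"
  by (induction k) (auto simp: sigma2_def)

lemma sigma3_pow: "(sigma3 ^^ k) 1 = (if even k then 1 else 3)"
  by (induction k) (auto simp: sigma3_def)

lemma SA_sigma1_no_thin_symmetric_set:
  assumes "Apsi_setting P K \<theta> M" "odd (order P)"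
  shows "\<not> has_thin_symmetric_set (E1 \<times>\<times> P) (SA E1 sigma1 P K \<theta> M) {\<one>\<^bsub>E1 \<times>\<times> P\<^esub>}"
  by (rule Apsi_orbits.no_thin_symmetric_set[OF Apsi_orbits_sigma1[OF assms(1)] assms(2)])
    (auto simp: E1_mult E1_one sigma1_def dest!: E1_cases)

lemma SA_sigma2_thin_symmetric_set:
  assumes "Apsi_setting P K \<theta> M"
  shows "has_thin_symmetric_set (E1 \<times>\<times> P) (SA E1 sigma2 P K \<theta> M) {\<one>\<^bsub>E1 \<times>\<times> P\<^esub>}"
  by (rule Apsi_orbits.thin_symmetric_set_of_fixed_involution[OF Apsi_orbits_sigma2[OF assms],
        of "(1, 1)"])
    (auto simp: E1_carrier E1_mult E1_one sigma2_def)

lemma SA_sigma3_thin_symmetric_set: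
  assumes "Apsi_setting P K \<theta> M"
  shows "has_thin_symmetric_set (E2 \<times>\<times> P) (SA E2 sigma3 P K \<theta> M) {\<one>\<^bsub>E2 \<times>\<times> P\<^esub>}"
  by (rule Apsi_orbits.thin_symmetric_set_of_fixed_involution[OF Apsi_orbits_sigma3[OF assms],
        of 2])
    (auto simp: E2_carrier E2_mult E2_one sigma3_def)

lemma SA_sigma2_symmetric_iff:
  assumes "Apsi_index_two P K \<theta> M" "cyclic_group P"
  shows "symmetric_sring (E1 \<times>\<times> P) (SA E1 sigma2 P K \<theta> M) {\<one>\<^bsub>E1 \<times>\<times> P\<^esub>} \<longleftrightarrow> inv_map P \<in> M"
proof -
  interpret I: Apsi_index_two P K \<theta> M by fact
  interpret O: Apsi_orbits P K \<theta> M E1 sigma2 by (rule Apsi_orbits_sigma2) unfold_locales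
  obtain g where gen: "g \<in> carrier P" "carrier P = range (\<lambda>n::int. g [^]\<^bsub>P\<^esub> n)"
    using assms(2) I.P.cyclic_group by blast
  show ?thesis
  proof
    assume "symmetric_sring O.G (SA E1 sigma2 P K \<theta> M) {\<one>\<^bsub>O.G\<^esub>}"
    moreover have "((1, 0), g) \<in> carrier O.G" using gen(1) by (simp add: E1_carrier)
    ultimately obtain x y where xy: "x \<in> O.orbit ((1, 0), g)" "y \<in> O.orbit ((1, 0), g)"
      "x \<otimes>\<^bsub>O.G\<^esub> y = \<one>\<^bsub>O.G\<^esub>"
      unfolding O.symmetric_sring_iff by blast
    then obtain k j where "fst x = (sigma2 ^^ k) (1, 0)" "fst y = (sigma2 ^^ j) (1, 0)"
      and "inv_map P \<in> M \<longleftrightarrow> (even k \<longleftrightarrow> even j)"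
      by (rule O.inverse_pair_parity[OF assms(1) gen])
    moreover have "fst x \<otimes>\<^bsub>E1\<^esub> fst y = \<one>\<^bsub>E1\<^esub>" using xy(3) by (simp add: mult_DirProd')
    ultimately show "inv_map P \<in> M" by (auto simp: sigma2_pow E1_mult E1_one split: if_splits)
  next
    assume inv_map: "inv_map P \<in> M"
    show "symmetric_sring O.G (SA E1 sigma2 P K \<theta> M) {\<one>\<^bsub>O.G\<^esub>}"
    proof (rule O.symmetric_sringI)
      fix h assume h: "h \<in> carrier O.G"
      have "O.act 0 (inv_map P) h \<in> O.orbit h" using inv_map unfolding O.orbit_def by blast
      moreover have "h \<otimes>\<^bsub>O.G\<^esub> O.act 0 (inv_map P) h = \<one>\<^bsub>O.G\<^esub>"
        using h I.M_carrier[OF inv_map]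
        by (auto simp: O.act_def inv_map_def mult_DirProd' E1_mult E1_one dest!: E1_cases)
      ultimately show "\<exists>x\<in>O.orbit h. h \<otimes>\<^bsub>O.G\<^esub> x = \<one>\<^bsub>O.G\<^esub>" by blast
    qed
  qed
qed

lemma SA_sigma3_symmetric_iff:
  assumes "Apsi_index_two P K \<theta> M" "cyclic_group P" "Factorial_Ring.prime (order P)"
  shows "symmetric_sring (E2 \<times>\<times> P) (SA E2 sigma3 P K \<theta> M) {\<one>\<^bsub>E2 \<times>\<times> P\<^esub>} \<longleftrightarrow> inv_map P \<notin> M"
proof -
  interpret I: Apsi_index_two P K \<theta> M by fact
  interpret O: Apsi_orbits P K \<theta> M E2 sigma3 by (rule Apsi_orbits_sigma3) unfold_locales
  obtain g where gen: "g \<in> carrier P" "carrier P = range (\<lambda>n::int. g [^]\<^bsub>P\<^esub> n)"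
    using assms(2) I.P.cyclic_group by blast
  show ?thesis
  proof
    assume "symmetric_sring O.G (SA E2 sigma3 P K \<theta> M) {\<one>\<^bsub>O.G\<^esub>}"
    moreover have "(1, g) \<in> carrier O.G" using gen(1) by (simp add: E2_carrier)
    ultimately obtain x y where xy: "x \<in> O.orbit (1, g)" "y \<in> O.orbit (1, g)"
      "x \<otimes>\<^bsub>O.G\<^esub> y = \<one>\<^bsub>O.G\<^esub>"
      unfolding O.symmetric_sring_iff by blast
    then obtain k j where "fst x = (sigma3 ^^ k) 1" "fst y = (sigma3 ^^ j) 1"
      and "inv_map P \<in> M \<longleftrightarrow> (even k \<longleftrightarrow> even j)"
      by (rule O.inverse_pair_parity[OF assms(1) gen])
    moreover have "fst x \<otimes>\<^bsub>E2\<^esub> fst y = \<one>\<^bsub>E2\<^esub>" using xy(3) by (simp add: mult_DirProd')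
    ultimately show "inv_map P \<notin> M" by (auto simp: sigma3_pow E2_mult E2_one split: if_splits)
  next
    assume "inv_map P \<notin> M"
    moreover have "inv_map P \<in> K" using I.inv_map_in_K assms(2,3) I.card_K_eq by simp
    ultimately obtain m where m: "m \<in> M" "inv_map P = m \<otimes>\<^bsub>AutoGroup P\<^esub> \<theta>"
      using I.not_in_M_coset by blast
    show "symmetric_sring O.G (SA E2 sigma3 P K \<theta> M) {\<one>\<^bsub>O.G\<^esub>}"
    proof (rule O.symmetric_sringI)
      fix h assume h: "h \<in> carrier O.G"
      have "O.act 1 m h \<in> O.orbit h" using m(1) unfolding O.orbit_def by blast
      moreover have "O.act 1 m h = (sigma3 (fst h), inv\<^bsub>P\<^esub> (snd h))"
        using h I.theta_carrier by (auto simp: O.act_def m(2)[symmetric] inv_map_def)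
      then have "h \<otimes>\<^bsub>O.G\<^esub> O.act 1 m h = \<one>\<^bsub>O.G\<^esub>"
        using h by (auto simp: mult_DirProd' E2_mult E2_one sigma3_def dest!: E2_cases)
      ultimately show "\<exists>x\<in>O.orbit h. h \<otimes>\<^bsub>O.G\<^esub> x = \<one>\<^bsub>O.G\<^esub>" by blast
    qed
  qed
qed

theorem lemma3p5:
  fixes p :: nat and P :: "('p, 'z) monoid_scheme"
    and K :: "('p \<Rightarrow> 'p) set" and \<theta> :: "'p \<Rightarrow> 'p"
    and M1 M2 M3 :: "('p \<Rightarrow> 'p) set"
  assumes "Factorial_Ring.prime p" and "p \<ge> 3"
    and "group P" and "cyclic_group P" and "order P = p"
    and "subgroup K (AutoGroup P)"
    and "\<theta> \<in> K" and "generate (AutoGroup P) {\<theta>} = K"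
    and "3 dvd card K \<Longrightarrow> index_subgroup P K M1 3"
    and "2 dvd card K \<Longrightarrow> index_subgroup P K M2 2"
    and "2 dvd card K \<Longrightarrow> index_subgroup P K M3 2"
  shows
    "(3 dvd card K \<and> 2 dvd card K \<longrightarrow>
        \<not> alg_isomorphic (E1 \<times>\<times> P) (SA E1 sigma1 P K \<theta> M1) (E1 \<times>\<times> P) (SA E1 sigma2 P K \<theta> M2)) \<and>
     (3 dvd card K \<and> 2 dvd card K \<longrightarrow>
        \<not> alg_isomorphic (E1 \<times>\<times> P) (SA E1 sigma1 P K \<theta> M1) (E2 \<times>\<times> P) (SA E2 sigma3 P K \<theta> M3)) \<and>
     (2 dvd card K \<and> 3 dvd card K \<longrightarrow>
        \<not> alg_isomorphic (E1 \<times>\<times> P) (SA E1 sigma2 P K \<theta> M2) (E1 \<times>\<times> P) (SA E1 sigma1 P K \<theta> M1)) \<and>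
     (2 dvd card K \<longrightarrow>
        \<not> alg_isomorphic (E1 \<times>\<times> P) (SA E1 sigma2 P K \<theta> M2) (E2 \<times>\<times> P) (SA E2 sigma3 P K \<theta> M3)) \<and>
     (2 dvd card K \<and> 3 dvd card K \<longrightarrow>
        \<not> alg_isomorphic (E2 \<times>\<times> P) (SA E2 sigma3 P K \<theta> M3) (E1 \<times>\<times> P) (SA E1 sigma1 P K \<theta> M1)) \<and>
     (2 dvd card K \<longrightarrow>
        \<not> alg_isomorphic (E2 \<times>\<times> P) (SA E2 sigma3 P K \<theta> M3) (E1 \<times>\<times> P) (SA E1 sigma2 P K \<theta> M2))"
proof -
  have finite_P: "finite (carrier P)"
    using assms(2,5) by (intro card_ge_0_finite) (simp add: order_def)
  have prime: "Factorial_Ring.prime (order P)" "odd (order P)"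
    using assms(1,2,5) prime_odd_nat by auto
  note setting = index_subgroup_Apsi_setting[OF assms(3) finite_P assms(6-8)]
  note index_two = index_subgroup_Apsi_index_two[OF assms(3) finite_P assms(6-8)]
  have M3: "M3 = M2" if "even (card K)"
    using Apsi_index_two.index_two_subgroup_unique index_two assms(10,11) that by metis
  note unit_1 = Apsi_orbits.unit_basic_set_iff[OF Apsi_orbits_sigma1[OF setting[OF assms(9)]]]
    and unit_2 = Apsi_orbits.unit_basic_set_iff[OF Apsi_orbits_sigma2[OF setting[OF assms(10)]]]
    and unit_3 = Apsi_orbits.unit_basic_set_iff[OF Apsi_orbits_sigma3[OF setting[OF assms(11)]]]
  note thin_1 = SA_sigma1_no_thin_symmetric_set[OF setting[OF assms(9)] prime(2)]
    and thin_2 = SA_sigma2_thin_symmetric_set[OF setting[OF assms(10)]]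
    and thin_3 = SA_sigma3_thin_symmetric_set[OF setting[OF assms(11)]]
  note symmetric_2 = SA_sigma2_symmetric_iff[OF index_two[OF assms(10)] assms(4)]
    and symmetric_3 = SA_sigma3_symmetric_iff[OF index_two[OF assms(11)] assms(4) prime(1)]
  show ?thesis
    apply (intro conjI impI notI; (elim conjE)?)
    subgoal using alg_isomorphic_invariants(1)[OF _ unit_1 unit_2] thin_1 thin_2 by blast
    subgoal using alg_isomorphic_invariants(1)[OF _ unit_1 unit_3] thin_1 thin_3 by blast
    subgoal using alg_isomorphic_invariants(1)[OF _ unit_2 unit_1] thin_1 thin_2 by blast
    subgoal using alg_isomorphic_invariants(2)[OF _ unit_2 unit_3] symmetric_2 symmetric_3 M3
      by blast
    subgoal using alg_isomorphic_invariants(1)[OF _ unit_3 unit_1] thin_1 thin_3 by blast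
    subgoal using alg_isomorphic_invariants(2)[OF _ unit_3 unit_2] symmetric_2 symmetric_3 M3
      by blast
    done
qed

end
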